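(* Let $\rho>0$, $x>0$, $\alpha,\beta\in\{\pm1\}$, and $\eta\in\mathbb{R}$ with $\alpha\eta\not\equiv-\pi$ and $\alpha\eta\not\equiv 0 \pmod{2\pi\rho}$. Define $$A_{\alpha,\beta}(s) = \frac{\beta \, e^{x \beta i}}{2\pi} \cot\!\left[ \frac{\frac{\pi}{2} + \alpha \eta + i \log\!\left[ \beta i - s^2 + s\left(s^2 - 2 \beta i\right)^{1/2} \right]}{2\rho} \right] \frac{1}{\left(s^2 - 2\beta i\right)^{1/2}},$$ let $\mathcal{P}_\rho(\alpha\eta)=\{\frac{\pi}{2}+\alpha\eta+2\pi\rho k : k\in\mathbb{Z}\}\cap[-\pi,\pi)$, $\sigma_\varphi=\operatorname{sgn}(\cos\varphi)$, $a^{(\alpha,\beta)}_\varphi=-\frac{\beta\rho\,e^{x\beta i}}{2\pi i}$, and $$B_{\alpha,\beta}(s)=A_{\alpha,\beta}(s)-\sum_{\varphi \in \mathcal{P}_\rho(\alpha\eta)} \frac{a^{(\alpha,\beta)}_\varphi}{s - \sigma_\varphi \left( \beta i - i \sin\varphi \right)^{1/2}},$$ with Taylor coefficients $b^{(\alpha,\beta)}_k$ at $s=0$. Then $$\int_{-\infty}^\infty e^{-x s^2} \, B_{\alpha,\beta}(s) \, ds \sim \sum_{k=0}^\infty b_{2k}^{(\alpha,\beta)} \, \Gamma\!\left( \frac{2k+1}{2} \right) \, x^{- \frac{2k+1}{2}} \qquad \text{as } x \to \infty,$$ and the leading coefficient is $$b_0^{(\alpha,\beta)} = \frac{\beta \,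 e^{\beta \left(x - \frac{\pi}{4}\right)i}}{2\pi i} \left\{ - \frac{\beta}{\sqrt{2}} \, \cot\!\left[ \frac{(1 - \beta) \, \frac{\pi}{2} + \alpha \eta}{2 \rho} \right] - \rho \sum_{\varphi \in \mathcal{P}_\rho(\alpha\eta)} \sigma_\varphi \, \left(1 - \beta \sin\varphi\right)^{-\frac{1}{2}} \right\}.$$
   Context: Square roots are principal branches ($\operatorname{Re} z^{1/2}\ge0$) and $\log$ is the principal logarithm with branch cut along the nonpositive real axis. The poles of $A_{\alpha,\beta}$ are at $s=\sigma_\varphi(\beta i-i\sin\varphi)^{1/2}$, $\varphi\in\mathcal{P}_\rho(\alpha\eta)$, with residues $a^{(\alpha,\beta)}_\varphi$. The symbol $\sim$ means: for each $N$, the integral minus the sum over $k<N$ is $\mathrm{O}(x^{-(2N+1)/2})$ as $x\to\infty$ (the coefficients $b^{(\alpha,\beta)}_k$ depend on $x$ only through the unimodular factor $e^{x\beta i}$). *)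

theory Defs
  imports "HOL-Analysis.Analysis" "HOL-Library.Landau_Symbols"
begin

text \<open>The function A_{alpha,beta}(s); csqrt and Ln are the principal branches.\<close>
definition A_fun :: "real \<Rightarrow> real \<Rightarrow> real \<Rightarrow> real \<Rightarrow> real \<Rightarrow> complex \<Rightarrow> complex" where
  "A_fun \<rho> \<alpha> \<beta> \<eta> x s =
     of_real \<beta> * exp (of_real (x * \<beta>) * \<i>) / (2 * of_real pi)
     * cot ((of_real (pi / 2 + \<alpha> * \<eta>)
             + \<i> * Ln (of_real \<beta> * \<i> - s\<^sup>2 + s * csqrt (s\<^sup>2 - 2 * of_real \<beta> * \<i>)))
            / (2 * of_real \<rho>))
     * (1 / csqrt (s\<^sup>2 - 2 * of_real \<beta> * \<i>))"

definition Pset :: "real \<Rightarrow> real \<Rightarrow> real set" where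
  "Pset \<rho> c = {\<phi>. \<exists>k::int. \<phi> = pi / 2 + c + 2 * pi * \<rho> * of_int k} \<inter> {-pi..<pi}"

definition sigma_sgn :: "real \<Rightarrow> real" where
  "sigma_sgn \<phi> = sgn (cos \<phi>)"

definition a_res :: "real \<Rightarrow> real \<Rightarrow> real \<Rightarrow> complex" where
  "a_res \<rho> \<beta> x = - (of_real (\<beta> * \<rho>) * exp (of_real (x * \<beta>) * \<i>)) / (2 * of_real pi * \<i>)"

definition B_fun :: "real \<Rightarrow> real \<Rightarrow> real \<Rightarrow> real \<Rightarrow> real \<Rightarrow> complex \<Rightarrow> complex" where
  "B_fun \<rho> \<alpha> \<beta> \<eta> x s =
     A_fun \<rho> \<alpha> \<beta> \<eta> x s
     - (\<Sum>\<phi>\<in>Pset \<rho> (\<alpha> * \<eta>).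
          a_res \<rho> \<beta> x /
          (s - of_real (sigma_sgn \<phi>) * csqrt (of_real \<beta> * \<i> - \<i> * of_real (sin \<phi>))))"

definition taylor_coeff :: "(complex \<Rightarrow> complex) \<Rightarrow> nat \<Rightarrow> complex" where
  "taylor_coeff f k = (deriv ^^ k) f 0 / of_nat (fact k)"

end

theory Submission
  imports Defs "HOL-Probability.Distributions" "HOL-Complex_Analysis.Complex_Analysis"
begin

(* Up to the unimodular factor e^{x\<beta>i}, B is an x-independent function which is analytic at
   every real point: the poles \<sigma>(\<beta>i - i sin \<phi>)^{1/2} lie off the real axis, and the argument of the
   cotangent is real only at s = 0, where the hypotheses on \<alpha>\<eta> keep it away from \<pi>\<int>.  B is also
   bounded on the real line, because for |s| \<ge> 2 the modulus of the logarithm's argument is at most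
   1/8 or at least 8, so the cotangent's argument stays in a half-plane |Im| \<ge> ln 8 / (2\<rho>).
   Hence B differs from its Taylor polynomial of degree < 2N by at most K |s|^{2N} on the whole real
   line, and integrating against the Gaussian (whose odd moments vanish) is Watson's lemma. *)

section \<open>Gaussian moments\<close>

lemma Gamma_nat_plus_half: "Gamma (real k + 1/2) = sqrt pi * fact (2 * k) / (4 ^ k * fact k)"
proof (induction k)
  case 0
  show ?case by (simp add: Gamma_one_half_real)
next
  case (Suc k)
  have "real k + 1/2 \<notin> \<int>\<^sub>\<le>\<^sub>0"
    using nonpos_Ints_nonpos by force
  then have "Gamma (real (Suc k) + 1/2) = (real k + 1/2) * Gamma (real k + 1/2)"
    using Gamma_plus1[of "real k + 1/2"] by (simp add: add_ac)
  also have "\<dots> = sqrt pi * fact (2 * Suc k) / (4 ^ Suc k * fact (Suc k))"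
  proof -
    have n: "fact (2 * Suc k) = 2 * (real k + 1) * (2 * real k + 1) * fact (2 * k)"
      by (simp add: algebra_simps)
    have d: "4 ^ Suc k * fact (Suc k) = 4 * (real k + 1) * (4 ^ k * fact k)"
      by simp
    have "(a + 1/2) * (s * F / D) = s * (2 * (a + 1) * (2 * a + 1) * F) / (4 * (a + 1) * D)"
      if "a \<ge> 0" for a s F D :: real
    proof -
      have "s * (2 * (a + 1) * (2 * a + 1) * F) / (4 * (a + 1) * D)
              = (4 * (a + 1)) * ((a + 1/2) * s * F) / ((4 * (a + 1)) * D)"
        by (simp add: algebra_simps)
      also have "\<dots> = (a + 1/2) * s * F / D"
        using that by (intro mult_divide_mult_cancel_left) auto
      finally show ?thesis
        by simp
    qed
    then show ?thesis
      unfolding Suc n d by simp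
  qed
  finally show ?case .
qed

lemma exp_neg_mult_square_eq_normal_density:
  assumes "x > 0"
  shows "exp (- (x * t\<^sup>2)) = sqrt (pi / x) * normal_density 0 (1 / sqrt (2 * x)) t"
  using assms by (simp add: normal_density_def real_sqrt_divide field_simps)

lemma gaussian_moment_has_integral:
  assumes x: "x > 0"
  shows "((\<lambda>t. exp (- (x * t\<^sup>2)) * t ^ j) has_integral
           (if even j then Gamma ((real j + 1) / 2) * x powr (- (real j + 1) / 2) else 0)) UNIV"
proof -
  define \<sigma> where "\<sigma> = 1 / sqrt (2 * x)"
  have \<sigma>: "\<sigma> > 0" "\<sigma>\<^sup>2 = 1 / (2 * x)"
    using x by (simp_all add: \<sigma>_def power_divide)
  define I where "I = (if even j then Gamma ((real j + 1) / 2) * x powr (- (real j + 1) / 2) else 0)"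
  have "has_bochner_integral lborel (\<lambda>t. normal_density 0 \<sigma> t * t ^ j) (I / sqrt (pi / x))"
  proof (cases "even j")
    case True
    then obtain k where j: "j = 2 * k" by blast
    have "(real j + 1) / 2 = real k + 1/2" "- (real j + 1) / 2 = - (real k + 1/2)"
      by (simp_all add: j)
    moreover have "x powr (real k + 1/2) = x ^ k * sqrt x"
      using x by (simp add: powr_add powr_realpow powr_half_sqrt)
    ultimately have "Gamma ((real j + 1) / 2) = sqrt pi * fact (2 * k) / (4 ^ k * fact k)"
      and "x powr (- (real j + 1) / 2) = 1 / (x ^ k * sqrt x)"
      by (simp_all only: Gamma_nat_plus_half powr_minus_divide)
    then have "I = sqrt pi * fact (2 * k) / (4 ^ k * fact k) * (1 / (x ^ k * sqrt x))"
      using True unfolding I_def by simp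
    moreover have "(2 / \<sigma>\<^sup>2) ^ k = 4 ^ k * x ^ k"
      by (simp add: \<sigma>(2) power_mult_distrib)
    ultimately have "I / sqrt (pi / x) = fact (2 * k) / ((2 / \<sigma>\<^sup>2) ^ k * fact k)"
      using x by (simp add: real_sqrt_divide)
    then show ?thesis
      using normal_moment_even[OF \<sigma>(1), of 0 k] by (simp add: j)
  next
    case False
    then obtain k where "j = 2 * k + 1" using oddE by blast
    then show ?thesis
      using normal_moment_odd[OF \<sigma>(1), of 0 k] False by (simp add: I_def)
  qed
  then have "has_bochner_integral lborel (\<lambda>t. sqrt (pi / x) * (normal_density 0 \<sigma> t * t ^ j))
              (sqrt (pi / x) * (I / sqrt (pi / x)))"
    by (rule has_bochner_integral_mult_right)
  then have "has_bochner_integral lborel (\<lambda>t. sqrt (pi / x) * (normal_density 0 \<sigma> t * t ^ j)) I"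
    using x by simp
  then have H: "has_bochner_integral lborel (\<lambda>t. exp (- (x * t\<^sup>2)) * t ^ j) I"
    unfolding exp_neg_mult_square_eq_normal_density[OF x] \<sigma>_def by (simp add: mult.assoc)
  show ?thesis
    unfolding I_def[symmetric] has_bochner_integral_integral_eq[OF H, symmetric]
    by (rule has_integral_integral_lborel[OF integrable.intros[OF H]])
qed

section \<open>Watson's lemma\<close>

lemma analytic_taylor_remainder_near_0:
  fixes f :: "complex \<Rightarrow> complex"
  assumes "f analytic_on {0}"
  obtains \<delta> K where "\<delta> > 0"
    "\<And>t::real. \<bar>t\<bar> \<le> \<delta> \<Longrightarrow>
       norm (f (of_real t) - (\<Sum>j<n. taylor_coeff f j * of_real t ^ j)) \<le> K * \<bar>t\<bar> ^ n"
proof -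
  obtain r where r: "r > 0" "f holomorphic_on ball 0 r"
    using assms analytic_at_ball by blast
  define \<delta> where "\<delta> = r / 2"
  have \<delta>: "\<delta> > 0" "cball 0 \<delta> \<subseteq> ball (0::complex) r"
    using r by (auto simp: \<delta>_def)
  have hol: "(deriv ^^ i) f holomorphic_on ball 0 r" for i
    using r by (intro holomorphic_higher_deriv) auto
  have "compact ((deriv ^^ Suc n) f ` cball 0 \<delta>)"
    using holomorphic_on_imp_continuous_on[OF hol[of "Suc n"]] \<delta>
    by (intro compact_continuous_image) (auto intro: continuous_on_subset simp del: funpow.simps)
  then obtain B where B: "\<And>z. z \<in> cball 0 \<delta> \<Longrightarrow> norm ((deriv ^^ Suc n) f z) \<le> B"
    using compact_imp_bounded bounded_iff by (metis imageI)
  have "norm (f (of_real t) - (\<Sum>j<n. taylor_coeff f j * of_real t ^ j))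
          \<le> (\<bar>B\<bar> * \<delta> / fact n + norm (taylor_coeff f n)) * \<bar>t\<bar> ^ n"
    if t: "\<bar>t\<bar> \<le> \<delta>" for t :: real
  proof -
    have "norm ((deriv ^^ 0) f (of_real t) - (\<Sum>i\<le>n. (deriv ^^ i) f 0 * (of_real t - 0) ^ i / fact i))
            \<le> B * norm (of_real t - 0 :: complex) ^ Suc n / fact n"
    proof (rule complex_Taylor[of "cball 0 \<delta>" n "\<lambda>i. (deriv ^^ i) f"])
      show "((deriv ^^ i) f has_field_derivative (deriv ^^ Suc i) f z) (at z within cball 0 \<delta>)"
        if "z \<in> cball 0 \<delta>" for i z
        using holomorphic_derivI[OF hol[of i]] that \<delta> by auto
    qed (use B t \<delta> in auto)
    also have "\<dots> = (B * \<bar>t\<bar>) * \<bar>t\<bar> ^ n / fact n"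
      by simp
    also have "\<dots> \<le> (\<bar>B\<bar> * \<delta>) * \<bar>t\<bar> ^ n / fact n"
      using t by (intro divide_right_mono mult_right_mono mult_mono) auto
    finally have "norm (f (of_real t) - (\<Sum>j<n. taylor_coeff f j * of_real t ^ j)
                    - taylor_coeff f n * of_real t ^ n) \<le> \<bar>B\<bar> * \<delta> / fact n * \<bar>t\<bar> ^ n"
      by (simp add: taylor_coeff_def lessThan_Suc_atMost[symmetric] algebra_simps)
    then show ?thesis
      using norm_triangle_ineq[of "f (of_real t) - (\<Sum>j<n. taylor_coeff f j * of_real t ^ j)
                                  - taylor_coeff f n * of_real t ^ n" "taylor_coeff f n * of_real t ^ n"]
      by (simp add: norm_mult norm_power distrib_right)
  qed
  with \<delta> that show ?thesis by blast
qed

lemma analytic_bounded_taylor_remainder_real: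
  fixes f :: "complex \<Rightarrow> complex"
  assumes "f analytic_on {0}" and bounded: "\<And>t::real. norm (f (of_real t)) \<le> M"
  obtains K where
    "\<And>t::real. norm (f (of_real t) - (\<Sum>j<n. taylor_coeff f j * of_real t ^ j)) \<le> K * \<bar>t\<bar> ^ n"
proof -
  obtain \<delta> K1 where \<delta>: "\<delta> > 0"
    and near: "\<And>t::real. \<bar>t\<bar> \<le> \<delta> \<Longrightarrow>
                 norm (f (of_real t) - (\<Sum>j<n. taylor_coeff f j * of_real t ^ j)) \<le> K1 * \<bar>t\<bar> ^ n"
    using analytic_taylor_remainder_near_0[OF assms(1)] by blast
  define K2 where "K2 = (\<bar>M\<bar> + (\<Sum>j<n. norm (taylor_coeff f j) * \<delta> ^ j)) / \<delta> ^ n"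
  have far: "norm (f (of_real t) - (\<Sum>j<n. taylor_coeff f j * of_real t ^ j)) \<le> K2 * \<bar>t\<bar> ^ n"
    if t: "\<delta> \<le> \<bar>t\<bar>" for t :: real
  proof -
    define R where "R = \<bar>t\<bar> ^ n / \<delta> ^ n"
    have pow: "\<bar>t\<bar> ^ j \<le> \<delta> ^ j * R" if "j \<le> n" for j
    proof -
      have "(\<bar>t\<bar> / \<delta>) ^ j \<le> (\<bar>t\<bar> / \<delta>) ^ n"
        using t \<delta> that by (intro power_increasing) auto
      then show ?thesis
        using \<delta> by (simp add: R_def field_simps)
    qed
    have "norm (f (of_real t) - (\<Sum>j<n. taylor_coeff f j * of_real t ^ j))
            \<le> norm (f (of_real t)) + norm (\<Sum>j<n. taylor_coeff f j * of_real t ^ j)"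
      by (rule norm_triangle_ineq4)
    also have "\<dots> \<le> \<bar>M\<bar> + (\<Sum>j<n. norm (taylor_coeff f j) * \<bar>t\<bar> ^ j)"
      using bounded[of t] norm_sum[of "\<lambda>j. taylor_coeff f j * of_real t ^ j" "{..<n}"]
      by (simp add: norm_mult norm_power)
    also have "\<dots> \<le> \<bar>M\<bar> * R + (\<Sum>j<n. norm (taylor_coeff f j) * (\<delta> ^ j * R))"
      using mult_left_mono[OF pow[of 0] abs_ge_zero[of M]] pow
      by (intro add_mono sum_mono mult_left_mono) auto
    also have "\<dots> = K2 * \<bar>t\<bar> ^ n"
    proof -
      have "(\<Sum>j<n. norm (taylor_coeff f j) * (\<delta> ^ j * R)) = (\<Sum>j<n. norm (taylor_coeff f j) * \<delta> ^ j) * R"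
        by (simp add: sum_distrib_right mult.assoc)
      then show ?thesis
        using \<delta> by (simp add: K2_def R_def field_simps)
    qed
    finally show ?thesis .
  qed
  have "norm (f (of_real t) - (\<Sum>j<n. taylor_coeff f j * of_real t ^ j)) \<le> max K1 K2 * \<bar>t\<bar> ^ n"
    for t :: real
  proof (cases "\<bar>t\<bar> \<le> \<delta>")
    case True
    then show ?thesis
      using near[of t] mult_right_mono[OF max.cobounded1[of K1 K2], of "\<bar>t\<bar> ^ n"] by simp
  next
    case False
    then show ?thesis
      using far[of t] mult_right_mono[OF max.cobounded2[of K2 K1], of "\<bar>t\<bar> ^ n"] by simp
  qed
  then show ?thesis
    using that by blast
qed

lemma sum_lessThan_double_even:
  fixes N :: nat
  shows "(\<Sum>j<2 * N. if even j then h j else 0) = (\<Sum>k<N. h (2 * k) :: 'a :: comm_monoid_add)"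
  by (induction N) (simp_all add: add_ac)

lemma gaussian_polynomial_has_integral:
  fixes c :: "nat \<Rightarrow> complex"
  assumes x: "x > 0"
  shows "((\<lambda>t. exp (- of_real (x * t\<^sup>2)) * (\<Sum>j<2 * N. c j * of_real t ^ j)) has_integral
           (\<Sum>k<N. c (2 * k) * of_real (Gamma ((2 * real k + 1) / 2))
                    * of_real (x powr (- (2 * real k + 1) / 2)))) UNIV"
proof -
  have moment: "((\<lambda>t. exp (- of_real (x * t\<^sup>2)) * (of_real t :: complex) ^ j) has_integral
      of_real (if even j then Gamma ((real j + 1) / 2) * x powr (- (real j + 1) / 2) else 0)) UNIV"
    for j
  proof -
    have "(\<lambda>t. exp (- of_real (x * t\<^sup>2)) * (of_real t :: complex) ^ j)
            = (\<lambda>t. of_real (exp (- (x * t\<^sup>2)) * t ^ j))"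
      by (simp add: fun_eq_iff exp_of_real[symmetric])
    then show ?thesis
      using has_integral_of_real[OF gaussian_moment_has_integral[OF x, of j]] by simp
  qed
  have "((\<lambda>t. \<Sum>j<2 * N. c j * (exp (- of_real (x * t\<^sup>2)) * of_real t ^ j)) has_integral
      (\<Sum>j<2 * N. c j * of_real (if even j then Gamma ((real j + 1) / 2)
                                            * x powr (- (real j + 1) / 2) else 0))) UNIV"
    by (intro has_integral_sum has_integral_mult_right moment) auto
  also have "(\<Sum>j<2 * N. c j * of_real (if even j then Gamma ((real j + 1) / 2)
                                         * x powr (- (real j + 1) / 2) else 0))
               = (\<Sum>k<N. c (2 * k) * of_real (Gamma ((2 * real k + 1) / 2))
                          * of_real (x powr (- (2 * real k + 1) / 2)))"
    using sum_lessThan_double_even[of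
        "\<lambda>j. c j * of_real (Gamma ((real j + 1) / 2) * x powr (- (real j + 1) / 2))" N]
    by (simp add: if_distrib mult.assoc cong: if_cong)
  finally show ?thesis
    by (simp add: sum_distrib_left ac_simps)
qed

lemma gaussian_integral_polynomial_approx:
  fixes f :: "real \<Rightarrow> complex" and c :: "nat \<Rightarrow> complex"
  assumes cont: "continuous_on UNIV f"
    and approx: "\<And>t. norm (f t - (\<Sum>j<2 * N. c j * of_real t ^ j)) \<le> K * \<bar>t\<bar> ^ (2 * N)"
    and x: "x > 0"
  shows "(\<lambda>t. exp (- of_real (x * t\<^sup>2)) * f t) integrable_on UNIV"
    and "norm (integral UNIV (\<lambda>t. exp (- of_real (x * t\<^sup>2)) * f t)
               - (\<Sum>k<N. c (2 * k) * of_real (Gamma ((2 * real k + 1) / 2))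
                          * of_real (x powr (- (2 * real k + 1) / 2))))
           \<le> K * Gamma ((2 * real N + 1) / 2) * x powr (- (2 * real N + 1) / 2)"
proof -
  define e :: "real \<Rightarrow> complex" where "e t = exp (- of_real (x * t\<^sup>2))" for t
  define P where "P t = (\<Sum>j<2 * N. c j * of_real t ^ j)" for t :: real
  define S where "S = (\<Sum>k<N. c (2 * k) * of_real (Gamma ((2 * real k + 1) / 2))
                                * of_real (x powr (- (2 * real k + 1) / 2)))"
  define G where "G = Gamma ((2 * real N + 1) / 2) * x powr (- (2 * real N + 1) / 2)"
  have eP: "((\<lambda>t. e t * P t) has_integral S) UNIV"
    unfolding e_def P_def S_def by (rule gaussian_polynomial_has_integral[OF x])
  have eR_bound: "norm (e t * (f t - P t)) \<le> K * (exp (- (x * t\<^sup>2)) * t ^ (2 * N))" for t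
  proof -
    have "norm (e t) = exp (- (x * t\<^sup>2))"
      by (simp add: e_def exp_of_real[symmetric] del: of_real_mult)
    moreover have "norm (f t - P t) \<le> K * t ^ (2 * N)"
      using approx[of t] by (simp add: P_def power_even_abs)
    ultimately show ?thesis
      by (simp add: norm_mult mult_left_mono mult.left_commute)
  qed
  have gK: "((\<lambda>t. K * (exp (- (x * t\<^sup>2)) * t ^ (2 * N))) has_integral K * G) UNIV"
    using gaussian_moment_has_integral[OF x, of "2 * N"]
    by (intro has_integral_mult_right) (simp add: G_def)
  have cont_eR: "continuous_on UNIV (\<lambda>t. e t * (f t - P t))"
    unfolding e_def P_def by (intro continuous_intros cont)
  have int_eR: "(\<lambda>t. e t * (f t - P t)) integrable_on UNIV"
    using gK by (intro measurable_bounded_by_integrable_imp_integrable[OF _ _ eR_bound]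
        continuous_imp_measurable_on_sets_lebesgue[OF cont_eR]) auto
  have "((\<lambda>t. e t * P t + e t * (f t - P t)) has_integral S + integral UNIV (\<lambda>t. e t * (f t - P t))) UNIV"
    by (intro has_integral_add eP integrable_integral int_eR)
  then have int_ef: "((\<lambda>t. e t * f t) has_integral S + integral UNIV (\<lambda>t. e t * (f t - P t))) UNIV"
    by (simp add: right_diff_distrib)
  have "norm (integral UNIV (\<lambda>t. e t * (f t - P t))) \<le> integral UNIV (\<lambda>t. K * (exp (- (x * t\<^sup>2)) * t ^ (2 * N)))"
    by (rule integral_norm_bound_integral[OF int_eR has_integral_integrable[OF gK] eR_bound])
  also have "\<dots> = K * G"
    by (rule integral_unique[OF gK])
  finally have "norm (integral UNIV (\<lambda>t. e t * f t) - S) \<le> K * G"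
    by (simp add: integral_unique[OF int_ef])
  then show "norm (integral UNIV (\<lambda>t. exp (- of_real (x * t\<^sup>2)) * f t)
               - (\<Sum>k<N. c (2 * k) * of_real (Gamma ((2 * real k + 1) / 2))
                          * of_real (x powr (- (2 * real k + 1) / 2))))
           \<le> K * Gamma ((2 * real N + 1) / 2) * x powr (- (2 * real N + 1) / 2)"
    by (simp add: e_def S_def G_def mult.assoc)
  show "(\<lambda>t. exp (- of_real (x * t\<^sup>2)) * f t) integrable_on UNIV"
    using has_integral_integrable[OF int_ef] by (simp add: e_def)
qed

lemma taylor_coeff_cmult:
  assumes "f analytic_on {0}"
  shows "taylor_coeff (\<lambda>s. c * f s) k = c * taylor_coeff f k"
  by (simp add: taylor_coeff_def higher_deriv_cmult'[OF assms])

theorem watson_lemma: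
  fixes f :: "complex \<Rightarrow> complex" and u :: "real \<Rightarrow> complex"
  assumes an: "f analytic_on {0}" and cont: "continuous_on UNIV (\<lambda>t::real. f (of_real t))"
    and bounded_f: "bounded (range (\<lambda>t::real. f (of_real t)))" and bounded_u: "bounded (range u)"
  shows "(\<forall>x>0. (\<lambda>s::real. exp (- of_real (x * s\<^sup>2)) * (u x * f (of_real s))) integrable_on UNIV)
    \<and> (\<forall>N::nat. (\<lambda>x. integral UNIV (\<lambda>s::real. exp (- of_real (x * s\<^sup>2)) * (u x * f (of_real s)))
          - (\<Sum>k<N. taylor_coeff (\<lambda>s. u x * f s) (2 * k) * of_real (Gamma ((2 * real k + 1) / 2))
                     * of_real (x powr (- (2 * real k + 1) / 2))))
        \<in> O[at_top](\<lambda>x. of_real (x powr (- (2 * real N + 1) / 2))))"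
proof -
  define I where "I x = integral UNIV (\<lambda>s::real. exp (- of_real (x * s\<^sup>2)) * f (of_real s))" for x
  define S where "S x N = (\<Sum>k<N. taylor_coeff f (2 * k) * of_real (Gamma ((2 * real k + 1) / 2))
                                    * of_real (x powr (- (2 * real k + 1) / 2)))" for x N
  obtain M where M: "\<And>t::real. norm (f (of_real t)) \<le> M"
    using bounded_f by (auto simp: bounded_iff)
  have expansion: "(\<lambda>s::real. exp (- of_real (x * s\<^sup>2)) * f (of_real s)) integrable_on UNIV"
    "norm (I x - S x N) \<le> K * Gamma ((2 * real N + 1) / 2) * x powr (- (2 * real N + 1) / 2)"
    if "x > 0"
      and "\<And>t::real. norm (f (of_real t) - (\<Sum>j<2 * N. taylor_coeff f j * of_real t ^ j))
                      \<le> K * \<bar>t\<bar> ^ (2 * N)"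
    for x K N
    using gaussian_integral_polynomial_approx[OF cont that(2) that(1)] unfolding I_def S_def
    by blast+
  obtain U where U: "\<And>x. norm (u x) \<le> U"
    using bounded_u by (auto simp: bounded_iff)
  have U0: "U \<ge> 0"
    using U[of 0] norm_ge_zero order_trans by blast
  have integral_eq: "integral UNIV (\<lambda>s::real. exp (- of_real (x * s\<^sup>2)) * (u x * f (of_real s))) = u x * I x"
    for x
    by (simp add: I_def mult.left_commute)
  have sum_eq: "(\<Sum>k<N. taylor_coeff (\<lambda>s. u x * f s) (2 * k) * of_real (Gamma ((2 * real k + 1) / 2))
                   * of_real (x powr (- (2 * real k + 1) / 2))) = u x * S x N" for x N
    by (simp add: S_def taylor_coeff_cmult[OF an] sum_distrib_left mult.assoc)
  show ?thesis
  proof (intro conjI allI impI)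
    fix x :: real
    assume "x > 0"
    obtain K where "\<And>t::real. norm (f (of_real t) - (\<Sum>j<2 * 0. taylor_coeff f j * of_real t ^ j))
                                \<le> K * \<bar>t\<bar> ^ (2 * 0)"
      using analytic_bounded_taylor_remainder_real[OF an M] by blast
    then show "(\<lambda>s::real. exp (- of_real (x * s\<^sup>2)) * (u x * f (of_real s))) integrable_on UNIV"
      using integrable_on_mult_right[OF expansion(1), of x 0 K "u x"] \<open>x > 0\<close>
      by (simp add: mult.left_commute)
  next
    fix N :: nat
    obtain K where K: "\<And>t::real. norm (f (of_real t) - (\<Sum>j<2 * N. taylor_coeff f j * of_real t ^ j))
                                   \<le> K * \<bar>t\<bar> ^ (2 * N)"
      using analytic_bounded_taylor_remainder_real[OF an M] by blast
    have "norm (u x * I x - u x * S x N)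
            \<le> U * K * Gamma ((2 * real N + 1) / 2) * norm (of_real (x powr (- (2 * real N + 1) / 2)) :: complex)"
      if "x > 0" for x
    proof -
      have "norm (u x * I x - u x * S x N) = norm (u x) * norm (I x - S x N)"
        by (simp add: norm_mult flip: right_diff_distrib)
      also have "\<dots> \<le> U * (K * Gamma ((2 * real N + 1) / 2) * x powr (- (2 * real N + 1) / 2))"
        using expansion(2)[OF that K] U[of x] U0 by (intro mult_mono) auto
      finally show ?thesis
        by (simp add: mult.assoc)
    qed
    then show "(\<lambda>x. integral UNIV (\<lambda>s::real. exp (- of_real (x * s\<^sup>2)) * (u x * f (of_real s)))
          - (\<Sum>k<N. taylor_coeff (\<lambda>s. u x * f s) (2 * k) * of_real (Gamma ((2 * real k + 1) / 2))
                     * of_real (x powr (- (2 * real k + 1) / 2))))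
        \<in> O[at_top](\<lambda>x. of_real (x powr (- (2 * real N + 1) / 2)))"
      unfolding integral_eq sum_eq
      by (intro bigoI eventually_mono[OF eventually_gt_at_top[of 0]]) blast
  qed
qed

section \<open>The cotangent away from the real axis\<close>

lemma norm_cot_le:
  fixes z :: complex
  assumes v: "v > 0" and Im_z: "v \<le> \<bar>Im z\<bar>"
  shows "norm (cot z) \<le> 2 / (1 - exp (-2 * v))"
proof -
  define e where "e = exp (-2 * v)"
  have e: "0 < e" "e < 1"
    using v by (auto simp: e_def)
  have upper: "norm (cot w) \<le> 2 / (1 - e)" if w: "v \<le> Im w" for w :: complex
  proof -
    define E where "E = exp (\<i> * w)"
    define u where "u = E\<^sup>2"
    have "E \<noteq> 0"
      by (simp add: E_def)
    have "norm u = exp (-2 * Im w)"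
      by (simp add: u_def E_def norm_power flip: exp_of_nat_mult)
    then have u: "norm u \<le> e"
      using w by (simp add: e_def)
    then have u1: "1 - e \<le> norm (u - 1)"
      using norm_triangle_ineq2[of 1 u] by (simp add: norm_minus_commute)
    then have "u \<noteq> 1"
      using e by auto
    have "cot w = ((E + 1 / E) / 2) / ((E - 1 / E) / (2 * \<i>))"
      unfolding cot_def cos_exp_eq sin_exp_eq E_def by (simp add: exp_minus')
    also have "\<dots> = \<i> * (u + 1) / (u - 1)"
      using \<open>E \<noteq> 0\<close> \<open>u \<noteq> 1\<close> by (simp add: u_def power2_eq_square field_simps)
    finally have "norm (cot w) = norm (u + 1) / norm (u - 1)"
      by (simp add: norm_mult norm_divide)
    also have "\<dots> \<le> 2 / (1 - e)"
      using norm_triangle_ineq[of u 1] u u1 e by (intro frac_le) auto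
    finally show ?thesis .
  qed
  show ?thesis
    using upper[of z] upper[of "- z"] Im_z by (cases "v \<le> Im z") (auto simp: e_def)
qed

section \<open>The reduced functions A and B\<close>

definition root_term :: "real \<Rightarrow> complex \<Rightarrow> complex" where
  "root_term \<beta> s = csqrt (s\<^sup>2 - 2 * of_real \<beta> * \<i>)"

definition log_term :: "real \<Rightarrow> complex \<Rightarrow> complex" where
  "log_term \<beta> s = of_real \<beta> * \<i> - s\<^sup>2 + s * root_term \<beta> s"

definition cot_arg :: "real \<Rightarrow> real \<Rightarrow> real \<Rightarrow> complex \<Rightarrow> complex" where
  "cot_arg \<rho> \<beta> c s = (of_real (pi / 2 + c) + \<i> * Ln (log_term \<beta> s)) / (2 * of_real \<rho>)"

definition pole :: "real \<Rightarrow> real \<Rightarrow> complex" where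
  "pole \<beta> \<phi> = of_real (sigma_sgn \<phi>) * csqrt (of_real \<beta> * \<i> - \<i> * of_real (sin \<phi>))"

definition A_red :: "real \<Rightarrow> real \<Rightarrow> real \<Rightarrow> complex \<Rightarrow> complex" where
  "A_red \<rho> \<beta> c s = of_real \<beta> / (2 * of_real pi) * cot (cot_arg \<rho> \<beta> c s) / root_term \<beta> s"

definition B_red :: "real \<Rightarrow> real \<Rightarrow> real \<Rightarrow> complex \<Rightarrow> complex" where
  "B_red \<rho> \<beta> c s = A_red \<rho> \<beta> c s
     - (\<Sum>\<phi>\<in>Pset \<rho> c. - of_real (\<beta> * \<rho>) / (2 * of_real pi * \<i>) / (s - pole \<beta> \<phi>))"

lemma B_fun_eq_B_red:
  "B_fun \<rho> \<alpha> \<beta> \<eta> x = (\<lambda>s. exp (of_real (x * \<beta>) * \<i>) * B_red \<rho> \<beta> (\<alpha> * \<eta>) s)"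
  by (simp add: fun_eq_iff B_fun_def B_red_def A_fun_def A_red_def a_res_def cot_arg_def
      log_term_def root_term_def pole_def sum_distrib_left right_diff_distrib mult_ac)

lemma root_term_real:
  fixes t \<beta> :: real
  assumes "\<beta> \<noteq> 0"
  defines "a \<equiv> Re (root_term \<beta> t)" and "b \<equiv> Im (root_term \<beta> t)"
  shows "a * b = - \<beta>" and "a\<^sup>2 - b\<^sup>2 = t\<^sup>2" and "\<bar>t\<bar> < a"
proof -
  have sq: "(root_term \<beta> t)\<^sup>2 = (of_real t)\<^sup>2 - 2 * of_real \<beta> * \<i>"
    by (simp add: root_term_def)
  have "2 * a * b = - 2 * \<beta>"
    using arg_cong[OF sq, of Im] by (simp add: a_def b_def Im_power2)
  then show ab: "a * b = - \<beta>"
    by simp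
  show a2b2: "a\<^sup>2 - b\<^sup>2 = t\<^sup>2"
    using arg_cong[OF sq, of Re] by (simp add: a_def b_def Re_power2)
  have "b \<noteq> 0"
    using ab assms by auto
  then have "t\<^sup>2 < a\<^sup>2"
    using a2b2 zero_less_power2[of b] by linarith
  then have "\<bar>t\<bar>\<^sup>2 < a\<^sup>2"
    by simp
  moreover have "a \<ge> 0"
    by (simp add: a_def root_term_def Re_csqrt)
  ultimately show "\<bar>t\<bar> < a"
    by (rule power2_less_imp_less)
qed

lemma log_term_real:
  fixes t \<beta> :: real
  assumes "\<beta> \<noteq> 0"
  defines "a \<equiv> Re (root_term \<beta> t)" and "b \<equiv> Im (root_term \<beta> t)"
  shows "Im (log_term \<beta> t) = (t - a) * b" and "norm (log_term \<beta> t) = a * (a - t)"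
proof -
  note ab = root_term_real[OF assms(1), of t, folded a_def b_def]
  have Re_w: "Re (log_term \<beta> t) = t * (a - t)"
    by (simp add: log_term_def a_def power2_eq_square algebra_simps)
  show Im_w: "Im (log_term \<beta> t) = (t - a) * b"
    using ab(1) by (simp add: log_term_def a_def b_def algebra_simps)
  have "(norm (log_term \<beta> t))\<^sup>2 = (a - t)\<^sup>2 * (t\<^sup>2 + b\<^sup>2)"
    unfolding cmod_power2 Re_w Im_w by algebra
  also have "t\<^sup>2 + b\<^sup>2 = a\<^sup>2"
    using ab(2) by simp
  finally have "(norm (log_term \<beta> t))\<^sup>2 = (a * (a - t))\<^sup>2"
    by (simp add: power_mult_distrib mult.commute)
  moreover have "0 \<le> a * (a - t)"
    using ab(3) by simp
  ultimately show "norm (log_term \<beta> t) = a * (a - t)"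
    using power2_eq_iff_nonneg[OF norm_ge_zero] by blast
qed

lemma Im_log_term_real_ne_0:
  fixes t \<beta> :: real
  assumes "\<beta> \<noteq> 0"
  shows "Im (log_term \<beta> t) \<noteq> 0"
  using log_term_real(1)[OF assms, of t] root_term_real(1,3)[OF assms, of t] assms by auto

lemma norm_log_term_real_mult:
  fixes t \<beta> :: real
  assumes "\<beta>\<^sup>2 = 1"
  defines "a \<equiv> Re (root_term \<beta> t)"
  shows "norm (log_term \<beta> t) * (a * (a + t)) = 1"
proof -
  have \<beta>: "\<beta> \<noteq> 0"
    using assms by auto
  define b where "b = Im (root_term \<beta> t)"
  note ab = root_term_real[OF \<beta>, of t, folded a_def b_def]
  have "norm (log_term \<beta> t) * (a * (a + t)) = a\<^sup>2 * (a\<^sup>2 - t\<^sup>2)"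
    unfolding log_term_real(2)[OF \<beta>, of t, folded a_def] by algebra
  also have "a\<^sup>2 - t\<^sup>2 = b\<^sup>2"
    using ab(2) by simp
  also have "a\<^sup>2 * b\<^sup>2 = (a * b)\<^sup>2"
    by (simp add: power_mult_distrib)
  also have "\<dots> = 1"
    by (simp only: ab(1) power2_minus assms(1))
  finally show ?thesis .
qed

lemma norm_log_term_real_eq_1:
  fixes t \<beta> :: real
  assumes "\<beta>\<^sup>2 = 1" and "norm (log_term \<beta> t) = 1"
  shows "t = 0"
proof -
  define a where "a = Re (root_term \<beta> t)"
  have \<beta>: "\<beta> \<noteq> 0"
    using assms(1) by auto
  have "a * (a - t) = 1" "a * (a + t) = 1"
    using assms log_term_real(2)[OF \<beta>, of t] norm_log_term_real_mult[OF assms(1), of t]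
    by (simp_all add: a_def)
  then have "a * a - a * t = 1" "a * a + a * t = 1"
    by (simp_all only: right_diff_distrib distrib_left)
  then have "a * t = 0"
    by linarith
  moreover have "a > 0"
    using root_term_real(3)[OF \<beta>, of t] by (simp add: a_def)
  ultimately show "t = 0"
    by simp
qed

lemma abs_ln_norm_log_term_real_ge:
  fixes t \<beta> :: real
  assumes \<beta>: "\<beta>\<^sup>2 = 1" and t: "2 \<le> \<bar>t\<bar>"
  shows "ln 8 \<le> \<bar>ln (norm (log_term \<beta> t))\<bar>"
proof -
  define a where "a = Re (root_term \<beta> t)"
  have \<beta>0: "\<beta> \<noteq> 0"
    using \<beta> by auto
  have a: "\<bar>t\<bar> < a"
    using root_term_real(3)[OF \<beta>0] by (simp add: a_def)
  show ?thesis
  proof (cases "t \<ge> 2")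
    case True
    then have "8 \<le> a * (a + t)"
      using a mult_mono[of 2 a 4 "a + t"] by auto
    moreover have "norm (log_term \<beta> t) = 1 / (a * (a + t))"
      using norm_log_term_real_mult[OF \<beta>, of t] True a
      by (simp add: a_def eq_divide_eq)
    ultimately have "ln (norm (log_term \<beta> t)) \<le> - ln 8"
      using True a by (simp add: ln_div)
    then show ?thesis
      by linarith
  next
    case False
    then have "8 \<le> a * (a - t)"
      using a t mult_mono[of 2 a 4 "a - t"] by auto
    then have "ln 8 \<le> ln (norm (log_term \<beta> t))"
      using log_term_real(2)[OF \<beta>0, of t] by (simp add: a_def)
    then show ?thesis
      by linarith
  qed
qed

lemma root_term_zero: "\<beta> \<in> {-1, 1} \<Longrightarrow> root_term \<beta> 0 = 1 - of_real \<beta> * \<i>"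
  unfolding root_term_def by (rule csqrt_unique) (auto simp: complex_eq_iff power2_eq_square)

lemma cot_arg_zero:
  "\<beta> \<in> {-1, 1} \<Longrightarrow> cot_arg \<rho> \<beta> c 0 = of_real (((1 - \<beta>) * (pi / 2) + c) / (2 * \<rho>))"
  by (auto simp: cot_arg_def log_term_def field_simps)

lemma pole_eq:
  assumes "\<beta> \<in> {-1, 1}"
  shows "pole \<beta> \<phi> = of_real (sigma_sgn \<phi> * sqrt ((1 - \<beta> * sin \<phi>) / 2)) * (1 + of_real \<beta> * \<i>)"
proof -
  define r where "r = sqrt ((1 - \<beta> * sin \<phi>) / 2)"
  have "\<beta> * sin \<phi> \<le> 1"
    using assms by auto
  then have r: "r \<ge> 0" "r\<^sup>2 = (1 - \<beta> * sin \<phi>) / 2"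
    by (simp_all add: r_def)
  have "(of_real r * (1 + of_real \<beta> * \<i>))\<^sup>2 = of_real (r\<^sup>2) * (1 + of_real \<beta> * \<i>)\<^sup>2"
    by (simp add: power_mult_distrib)
  also have "\<dots> = of_real \<beta> * \<i> - \<i> * of_real (sin \<phi>)"
    using assms unfolding r(2) by (auto simp: power2_eq_square complex_eq_iff field_simps)
  finally have "csqrt (of_real \<beta> * \<i> - \<i> * of_real (sin \<phi>)) = of_real r * (1 + of_real \<beta> * \<i>)"
    using r(1) by (intro csqrt_unique) (auto simp: less_eq_real_def)
  then show ?thesis
    by (simp add: pole_def r_def)
qed

lemma exp_neg_beta_quarter_pi:
  "\<beta> \<in> {-1, 1} \<Longrightarrow> exp (of_real (- \<beta> * pi / 4) * \<i>) = (1 - of_real \<beta> * \<i>) / of_real (sqrt 2)"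
  by (auto simp: exp_eq_polar cos_45 sin_45 complex_eq_iff field_simps)

lemma norm_root_term_real_ge:
  fixes t \<beta> :: real
  assumes "\<beta>\<^sup>2 = 1"
  shows "1 \<le> norm (root_term \<beta> t)"
proof -
  have "\<bar>Im ((of_real t)\<^sup>2 - 2 * of_real \<beta> * \<i> :: complex)\<bar> = 2"
    using assms by (simp add: abs_square_eq_1)
  then have "1 \<le> norm ((of_real t)\<^sup>2 - 2 * of_real \<beta> * \<i> :: complex)"
    using abs_Im_le_cmod[of "(of_real t)\<^sup>2 - 2 * of_real \<beta> * \<i>"] by linarith
  then show ?thesis
    by (simp add: root_term_def)
qed

lemma A_red_zero:
  assumes "\<beta> \<in> {-1, 1}"
  shows "A_red \<rho> \<beta> c 0 = of_real \<beta> * (1 - of_real \<beta> * \<i>) / (2 * of_real pi * \<i>)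
           * of_real (- (\<beta> / 2) * cot (((1 - \<beta>) * (pi / 2) + c) / (2 * \<rho>)))"
proof -
  have alg: "B / (2 * P) * X / (1 - B * \<i>) = B * (1 - B * \<i>) / (2 * P * \<i>) * (- (B / 2) * X)"
    if "B * B = 1" "P \<noteq> 0" for B P X :: complex
  proof -
    have "(1 - B * \<i>) * (1 + B * \<i>) = 2"
      using that(1) by (simp add: algebra_simps)
    then have "1 - B * \<i> \<noteq> 0"
      by auto
    then show ?thesis
      using that by (simp add: field_simps) algebra
  qed
  have "of_real \<beta> * of_real \<beta> = (1 :: complex)"
    using assms by auto
  then show ?thesis
    using alg[of "of_real \<beta>" "of_real pi" "of_real (cot (((1 - \<beta>) * (pi / 2) + c) / (2 * \<rho>)))"]
    by (simp add: A_red_def cot_arg_zero[OF assms] root_term_zero[OF assms] cot_of_real)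
qed

lemma pole_term_zero:
  assumes \<beta>: "\<beta> \<in> {-1, 1}" and "cos \<phi> \<noteq> 0"
  shows "- of_real (\<beta> * \<rho>) / (2 * of_real pi * \<i>) / (0 - pole \<beta> \<phi>)
           = of_real \<beta> * (1 - of_real \<beta> * \<i>) / (2 * of_real pi * \<i>)
             * of_real (\<rho> * sigma_sgn \<phi> / (2 * sqrt ((1 - \<beta> * sin \<phi>) / 2)))"
proof -
  have alg: "- (B * R) / (2 * P * \<i>) / (0 - \<sigma> * Q * (1 + B * \<i>))
               = B * (1 - B * \<i>) / (2 * P * \<i>) * (R * \<sigma> / (2 * Q))"
    if "B * B = 1" "\<sigma> * \<sigma> = 1" "P \<noteq> 0" "Q \<noteq> 0" for B \<sigma> P Q R :: complex
  proof -
    have two: "(1 - B * \<i>) * (1 + B * \<i>) = 2"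
      using that(1) by (simp add: algebra_simps)
    then have "\<sigma> * Q * (1 + B * \<i>) \<noteq> 0" "\<sigma> \<noteq> 0"
      using that by auto
    then show ?thesis
      using that by (simp add: divide_simps) (use two in algebra)
  qed
  define r where "r = sqrt ((1 - \<beta> * sin \<phi>) / 2)"
  have "(sin \<phi>)\<^sup>2 < 1"
    using assms(2) sin_cos_squared_add[of \<phi>] by (smt (verit) zero_less_power2)
  then have "r \<noteq> 0"
    using \<beta> by (auto simp: r_def abs_square_less_1)
  moreover have "\<beta> * \<beta> = 1" "sigma_sgn \<phi> * sigma_sgn \<phi> = 1"
    using \<beta> assms(2) by (auto simp: sigma_sgn_def sgn_if)
  then have "of_real \<beta> * of_real \<beta> = (1 :: complex)"
    and "of_real (sigma_sgn \<phi>) * of_real (sigma_sgn \<phi>) = (1 :: complex)"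
    by (metis of_real_1 of_real_mult)+
  ultimately show ?thesis
    using alg[of "of_real \<beta>" "of_real (sigma_sgn \<phi>)" "of_real pi" "of_real r" "of_real \<rho>"]
    unfolding pole_eq[OF \<beta>] r_def[symmetric] by simp
qed

lemma sum_powr_neg_half_div_sqrt_2:
  assumes "\<beta> \<in> {-1, 1}"
  shows "(\<Sum>\<phi>\<in>P. g \<phi> * (1 - \<beta> * sin \<phi>) powr (- 1 / 2)) / sqrt 2
           = (\<Sum>\<phi>\<in>P. g \<phi> / (2 * sqrt ((1 - \<beta> * sin \<phi>) / 2)))"
proof -
  have "g \<phi> * (1 - \<beta> * sin \<phi>) powr (- 1 / 2) / sqrt 2 = g \<phi> / (2 * sqrt ((1 - \<beta> * sin \<phi>) / 2))"
    for \<phi>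
  proof -
    have u: "0 \<le> 1 - \<beta> * sin \<phi>"
      using assms sin_le_one[of \<phi>] sin_ge_minus_one[of \<phi>] by auto
    have "2 * sqrt ((1 - \<beta> * sin \<phi>) / 2) = sqrt (2 * 2) * sqrt ((1 - \<beta> * sin \<phi>) / 2)"
      by simp
    also have "\<dots> = sqrt 2 * sqrt (1 - \<beta> * sin \<phi>)"
      by (simp only: real_sqrt_mult[symmetric]) simp
    finally have "sqrt (1 - \<beta> * sin \<phi>) * sqrt 2 = 2 * sqrt ((1 - \<beta> * sin \<phi>) / 2)"
      by (simp add: mult.commute)
    then show ?thesis
      using u by (simp add: powr_minus_divide powr_half_sqrt)
  qed
  then show ?thesis
    by (simp add: sum_divide_distrib)
qed

locale nonresonant =
  fixes \<rho> \<beta> c :: real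
  assumes rho_pos: "\<rho> > 0"
    and beta_sign: "\<beta> \<in> {-1, 1}"
    and c_not_neg_pi: "\<not> (\<exists>k::int. c = - pi + 2 * pi * \<rho> * of_int k)"
    and c_not_0: "\<not> (\<exists>k::int. c = 2 * pi * \<rho> * of_int k)"
begin

lemma beta_square: "\<beta>\<^sup>2 = 1"
  using beta_sign by auto

lemma beta_ne_0: "\<beta> \<noteq> 0"
  using beta_sign by auto

lemma cos_ne_0_if_Pset:
  assumes "\<phi> \<in> Pset \<rho> c"
  shows "cos \<phi> \<noteq> 0"
proof
  assume "cos \<phi> = 0"
  then obtain i :: int where i: "odd i" "\<phi> = of_int i * (pi / 2)"
    using cos_zero_iff_int by blast
  obtain k :: int where k: "\<phi> = pi / 2 + c + 2 * pi * \<rho> * of_int k" and "- pi \<le> \<phi>" "\<phi> < pi"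
    using assms by (auto simp: Pset_def)
  then have "- 2 * (pi / 2) \<le> of_int i * (pi / 2)" "of_int i * (pi / 2) < 2 * (pi / 2)"
    using i by auto
  then have "- 2 \<le> i" "i < 2"
    by (simp_all only: mult_le_cancel_right_pos mult_less_cancel_right_pos pi_half_gt_zero)
  with i(1) have "i = -1 \<or> i = 1"
    by presburger
  then show False
  proof
    assume "i = -1"
    then have "c = - pi + 2 * pi * \<rho> * of_int (- k)"
      using i(2) k by (simp add: algebra_simps)
    with c_not_neg_pi show False
      by blast
  next
    assume "i = 1"
    then have "c = 2 * pi * \<rho> * of_int (- k)"
      using i(2) k by (simp add: algebra_simps)
    with c_not_0 show False
      by blast
  qed
qed

lemma Im_pole_ne_0:
  assumes "\<phi> \<in> Pset \<rho> c"
  shows "Im (pole \<beta> \<phi>) \<noteq> 0"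
proof -
  have "(sin \<phi>)\<^sup>2 < 1"
    using cos_ne_0_if_Pset[OF assms] sin_cos_squared_add[of \<phi>]
    by (smt (verit) zero_less_power2)
  then have "\<beta> * sin \<phi> < 1"
    using beta_sign by (auto simp: abs_square_less_1)
  then show ?thesis
    using cos_ne_0_if_Pset[OF assms] beta_sign by (auto simp: pole_eq sigma_sgn_def sgn_if)
qed

lemma sin_cot_arg_ne_0: "sin (cot_arg \<rho> \<beta> c (of_real t)) \<noteq> 0"
proof
  assume "sin (cot_arg \<rho> \<beta> c (of_real t)) = 0"
  then obtain n :: int where n: "cot_arg \<rho> \<beta> c (of_real t) = of_real (n * pi)"
    using sin_eq_0 by blast
  have "log_term \<beta> t \<noteq> 0"
    using Im_log_term_real_ne_0[OF beta_ne_0, of t] by auto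
  then have "ln (norm (log_term \<beta> t)) = 0"
    using arg_cong[OF n, of Im] rho_pos by (simp add: cot_arg_def)
  then have "t = 0"
    using norm_log_term_real_eq_1[OF beta_square] \<open>log_term \<beta> t \<noteq> 0\<close> by simp
  then have "cot_arg \<rho> \<beta> c 0 = of_real (n * pi)"
    using n by simp
  then have "((1 - \<beta>) * (pi / 2) + c) / (2 * \<rho>) = n * pi"
    unfolding cot_arg_zero[OF beta_sign] of_real_eq_iff .
  then have "(1 - \<beta>) * (pi / 2) + c = 2 * pi * \<rho> * of_int n"
    using rho_pos by (simp add: field_simps)
  with beta_sign have "c = - pi + 2 * pi * \<rho> * of_int n \<or> c = 2 * pi * \<rho> * of_int n"
    by auto
  then show False
    using c_not_neg_pi c_not_0 by blast
qed

lemma B_red_analytic: "B_red \<rho> \<beta> c analytic_on {of_real t}"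
proof -
  have "(of_real t)\<^sup>2 - 2 * of_real \<beta> * \<i> \<notin> \<real>\<^sub>\<le>\<^sub>0"
    using beta_sign by (auto simp: complex_nonpos_Reals_iff)
  moreover have "log_term \<beta> t \<notin> \<real>\<^sub>\<le>\<^sub>0"
    using Im_log_term_real_ne_0[OF beta_ne_0, of t] by (auto simp: complex_nonpos_Reals_iff)
  moreover have "root_term \<beta> t \<noteq> 0"
    using root_term_real(3)[of \<beta> t] beta_sign by auto
  moreover have "of_real t \<noteq> pole \<beta> \<phi>" if "\<phi> \<in> Pset \<rho> c" for \<phi>
    using Im_pole_ne_0[OF that] by (metis Im_complex_of_real)
  ultimately show ?thesis
    using sin_cot_arg_ne_0[of t] rho_pos
    unfolding B_red_def[abs_def] A_red_def cot_arg_def log_term_def root_term_def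
    by (intro analytic_intros) auto
qed

lemma B_red_continuous: "continuous_on UNIV (\<lambda>t::real. B_red \<rho> \<beta> c (of_real t))"
  by (intro continuous_at_imp_continuous_on ballI
      isCont_o2[OF isCont_of_real[OF continuous_ident] analytic_at_imp_isCont[OF B_red_analytic]])

lemma norm_A_red_le:
  fixes t :: real
  assumes "2 \<le> \<bar>t\<bar>"
  shows "norm (A_red \<rho> \<beta> c (of_real t)) \<le> 1 / (pi * (1 - exp (- ln 8 / \<rho>)))"
proof -
  have "log_term \<beta> t \<noteq> 0"
    using Im_log_term_real_ne_0[OF beta_ne_0, of t] by auto
  then have "ln 8 / (2 * \<rho>) \<le> \<bar>Im (cot_arg \<rho> \<beta> c (of_real t))\<bar>"
    using abs_ln_norm_log_term_real_ge[OF beta_square assms] rho_pos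
    by (simp add: cot_arg_def Re_Ln divide_right_mono)
  then have "norm (cot (cot_arg \<rho> \<beta> c (of_real t))) \<le> 2 / (1 - exp (- ln 8 / \<rho>))"
    using norm_cot_le[of "ln 8 / (2 * \<rho>)"] rho_pos by simp
  moreover have "1 \<le> norm (root_term \<beta> t)"
    by (rule norm_root_term_real_ge[OF beta_square])
  moreover have e: "exp (- ln 8 / \<rho>) < 1"
    using rho_pos by simp
  ultimately have "norm (cot (cot_arg \<rho> \<beta> c (of_real t))) / (2 * pi * norm (root_term \<beta> t))
                     \<le> (2 / (1 - exp (- ln 8 / \<rho>))) / (2 * pi * 1)"
    by (intro frac_le mult_left_mono) auto
  moreover have "norm (A_red \<rho> \<beta> c (of_real t))
                   = norm (cot (cot_arg \<rho> \<beta> c (of_real t))) / (2 * pi * norm (root_term \<beta> t))"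
    using beta_sign by (auto simp: A_red_def norm_mult norm_divide)
  ultimately show ?thesis
    by (simp add: mult.commute)
qed

lemma B_red_bounded: "bounded (range (\<lambda>t::real. B_red \<rho> \<beta> c (of_real t)))"
proof -
  define a where "a = - of_real (\<beta> * \<rho>) / (2 * of_real pi * \<i>)"
  define C where "C = 1 / (pi * (1 - exp (- ln 8 / \<rho>))) + (\<Sum>\<phi>\<in>Pset \<rho> c. norm a / \<bar>Im (pole \<beta> \<phi>)\<bar>)"
  have "bounded ((\<lambda>t::real. B_red \<rho> \<beta> c (of_real t)) ` {-2..2})"
    by (intro compact_imp_bounded compact_continuous_image continuous_on_subset[OF B_red_continuous]) auto
  then obtain M where M: "\<forall>t\<in>{-2..2}. norm (B_red \<rho> \<beta> c (of_real t)) \<le> M"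
    by (auto simp: bounded_iff)
  have pole_term: "norm (a / (of_real t - pole \<beta> \<phi>)) \<le> norm a / \<bar>Im (pole \<beta> \<phi>)\<bar>"
    if "\<phi> \<in> Pset \<rho> c" for t \<phi>
  proof -
    have "\<bar>Im (pole \<beta> \<phi>)\<bar> \<le> norm (of_real t - pole \<beta> \<phi>)"
      using abs_Im_le_cmod[of "of_real t - pole \<beta> \<phi>"] by simp
    moreover have "0 < \<bar>Im (pole \<beta> \<phi>)\<bar>"
      using Im_pole_ne_0[OF that] by simp
    ultimately show ?thesis
      unfolding norm_divide by (intro divide_left_mono mult_pos_pos) auto
  qed
  have far: "norm (B_red \<rho> \<beta> c (of_real t)) \<le> C" if "2 \<le> \<bar>t\<bar>" for t :: real
  proof -
    have "norm (B_red \<rho> \<beta> c (of_real t))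
            \<le> norm (A_red \<rho> \<beta> c (of_real t)) + norm (\<Sum>\<phi>\<in>Pset \<rho> c. a / (of_real t - pole \<beta> \<phi>))"
      unfolding B_red_def a_def[symmetric] by (rule norm_triangle_ineq4)
    also have "\<dots> \<le> norm (A_red \<rho> \<beta> c (of_real t)) + (\<Sum>\<phi>\<in>Pset \<rho> c. norm (a / (of_real t - pole \<beta> \<phi>)))"
      by (intro add_left_mono norm_sum)
    also have "\<dots> \<le> C"
      unfolding C_def using norm_A_red_le[OF that] pole_term by (intro add_mono sum_mono) auto
    finally show ?thesis .
  qed
  have "norm (B_red \<rho> \<beta> c (of_real t)) \<le> max M C" for t :: real
  proof (cases "\<bar>t\<bar> \<le> 2")
    case True
    then have "norm (B_red \<rho> \<beta> c (of_real t)) \<le> M"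
      using M by (auto simp: abs_le_iff)
    then show ?thesis
      by (rule max.coboundedI1)
  next
    case False
    then have "norm (B_red \<rho> \<beta> c (of_real t)) \<le> C"
      by (intro far) auto
    then show ?thesis
      by (rule max.coboundedI2)
  qed
  then show ?thesis
    by (auto simp: bounded_iff)
qed

lemma B_red_zero:
  "B_red \<rho> \<beta> c 0 = of_real \<beta> * exp (of_real (- \<beta> * pi / 4) * \<i>) / (2 * of_real pi * \<i>)
     * of_real (- (\<beta> / sqrt 2) * cot (((1 - \<beta>) * (pi / 2) + c) / (2 * \<rho>))
                - \<rho> * (\<Sum>\<phi>\<in>Pset \<rho> c. sigma_sgn \<phi> * (1 - \<beta> * sin \<phi>) powr (- 1 / 2)))"
proof -
  define K where "K = of_real \<beta> * (1 - of_real \<beta> * \<i>) / (2 * of_real pi * \<i>)"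
  define Q where "Q \<phi> = sqrt ((1 - \<beta> * sin \<phi>) / 2)" for \<phi>
  define C where "C = cot (((1 - \<beta>) * (pi / 2) + c) / (2 * \<rho>))"
  have real_eq: "- (\<beta> / 2) * C - \<rho> * (\<Sum>\<phi>\<in>Pset \<rho> c. sigma_sgn \<phi> / (2 * Q \<phi>))
      = (- (\<beta> / sqrt 2) * C - \<rho> * (\<Sum>\<phi>\<in>Pset \<rho> c. sigma_sgn \<phi> * (1 - \<beta> * sin \<phi>) powr (- 1 / 2)))
        / sqrt 2"
  proof -
    have sum: "(\<Sum>\<phi>\<in>Pset \<rho> c. sigma_sgn \<phi> * (1 - \<beta> * sin \<phi>) powr (- 1 / 2)) / sqrt 2
                 = (\<Sum>\<phi>\<in>Pset \<rho> c. sigma_sgn \<phi> / (2 * Q \<phi>))"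
      unfolding Q_def by (rule sum_powr_neg_half_div_sqrt_2[OF beta_sign])
    show ?thesis
      unfolding sum[symmetric] by (simp add: diff_divide_distrib)
  qed
  have A: "A_red \<rho> \<beta> c 0 = K * of_real (- (\<beta> / 2) * C)"
    unfolding K_def C_def by (rule A_red_zero[OF beta_sign])
  have P: "- of_real (\<beta> * \<rho>) / (2 * of_real pi * \<i>) / (0 - pole \<beta> \<phi>)
             = K * of_real (\<rho> * (sigma_sgn \<phi> / (2 * Q \<phi>)))" if "\<phi> \<in> Pset \<rho> c" for \<phi>
    unfolding K_def Q_def times_divide_eq_right
    by (rule pole_term_zero[OF beta_sign cos_ne_0_if_Pset[OF that]])
  have S: "(\<Sum>\<phi>\<in>Pset \<rho> c. - of_real (\<beta> * \<rho>) / (2 * of_real pi * \<i>) / (0 - pole \<beta> \<phi>))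
             = (\<Sum>\<phi>\<in>Pset \<rho> c. K * of_real (\<rho> * (sigma_sgn \<phi> / (2 * Q \<phi>))))"
    by (rule sum.cong[OF refl]) (rule P)
  have "B_red \<rho> \<beta> c 0 = K * of_real (- (\<beta> / 2) * C)
                         - (\<Sum>\<phi>\<in>Pset \<rho> c. K * of_real (\<rho> * (sigma_sgn \<phi> / (2 * Q \<phi>))))"
    unfolding B_red_def A S ..
  also have "\<dots> = K * of_real (- (\<beta> / 2) * C - \<rho> * (\<Sum>\<phi>\<in>Pset \<rho> c. sigma_sgn \<phi> / (2 * Q \<phi>)))"
    by (simp only: of_real_diff of_real_mult of_real_sum sum_distrib_left right_diff_distrib)
  also have "\<dots> = K * (of_real (- (\<beta> / sqrt 2) * C
                      - \<rho> * (\<Sum>\<phi>\<in>Pset \<rho> c. sigma_sgn \<phi> * (1 - \<beta> * sin \<phi>) powr (- 1 / 2)))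
                    / of_real (sqrt 2))"
    unfolding real_eq of_real_divide ..
  also have "\<dots> = of_real \<beta> * ((1 - of_real \<beta> * \<i>) / of_real (sqrt 2)) / (2 * of_real pi * \<i>)
               * of_real (- (\<beta> / sqrt 2) * C
                  - \<rho> * (\<Sum>\<phi>\<in>Pset \<rho> c. sigma_sgn \<phi> * (1 - \<beta> * sin \<phi>) powr (- 1 / 2)))"
    unfolding K_def by (simp only: divide_inverse ac_simps)
  finally show ?thesis
    unfolding exp_neg_beta_quarter_pi[OF beta_sign] C_def .
qed

lemma taylor_coeff_phase_B_red_0:
  "taylor_coeff (\<lambda>s. exp (of_real (x * \<beta>) * \<i>) * B_red \<rho> \<beta> c s) 0 =
     of_real \<beta> * exp (of_real (\<beta> * (x - pi / 4)) * \<i>) / (2 * of_real pi * \<i>)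
     * of_real (- (\<beta> / sqrt 2) * cot (((1 - \<beta>) * (pi / 2) + c) / (2 * \<rho>))
                - \<rho> * (\<Sum>\<phi>\<in>Pset \<rho> c. sigma_sgn \<phi> * (1 - \<beta> * sin \<phi>) powr (- 1 / 2)))"
proof -
  have "exp (of_real (\<beta> * (x - pi / 4)) * \<i>) = exp (of_real (x * \<beta>) * \<i> + of_real (- \<beta> * pi / 4) * \<i>)"
    by (simp add: algebra_simps)
  then have "exp (of_real (\<beta> * (x - pi / 4)) * \<i>)
               = exp (of_real (x * \<beta>) * \<i>) * exp (of_real (- \<beta> * pi / 4) * \<i>)"
    by (simp only: exp_add)
  moreover have "taylor_coeff (\<lambda>s. exp (of_real (x * \<beta>) * \<i>) * B_red \<rho> \<beta> c s) 0
                   = exp (of_real (x * \<beta>) * \<i>) * B_red \<rho> \<beta> c 0"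
    by (simp add: taylor_coeff_def)
  ultimately show ?thesis
    unfolding B_red_zero by (simp only: divide_inverse ac_simps)
qed

end

theorem mainTheorem8:
  fixes \<rho> \<alpha> \<beta> \<eta> :: real
  assumes "\<rho> > 0"
    and "\<alpha> \<in> {-1, 1}" and "\<beta> \<in> {-1, 1}"
    and "\<not> (\<exists>k::int. \<alpha> * \<eta> = - pi + 2 * pi * \<rho> * of_int k)"
    and "\<not> (\<exists>k::int. \<alpha> * \<eta> = 2 * pi * \<rho> * of_int k)"
  shows "(\<forall>x>0. (\<lambda>s::real. exp (- of_real (x * s\<^sup>2)) * B_fun \<rho> \<alpha> \<beta> \<eta> x (of_real s))
                   integrable_on UNIV)
    \<and> (\<forall>N::nat.
        (\<lambda>x::real. integral UNIV (\<lambda>s::real. exp (- of_real (x * s\<^sup>2)) * B_fun \<rho> \<alpha> \<beta> \<eta> x (of_real s))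
            - (\<Sum>k<N. taylor_coeff (B_fun \<rho> \<alpha> \<beta> \<eta> x) (2 * k)
                        * of_real (Gamma ((2 * real k + 1) / 2))
                        * of_real (x powr (- (2 * real k + 1) / 2))))
        \<in> O[at_top](\<lambda>x. of_real (x powr (- (2 * real N + 1) / 2))))
    \<and> (\<forall>x>0. taylor_coeff (B_fun \<rho> \<alpha> \<beta> \<eta> x) 0 =
        of_real \<beta> * exp (of_real (\<beta> * (x - pi / 4)) * \<i>) / (2 * of_real pi * \<i>)
        * of_real (- (\<beta> / sqrt 2) * cot (((1 - \<beta>) * (pi / 2) + \<alpha> * \<eta>) / (2 * \<rho>))
                   - \<rho> * (\<Sum>\<phi>\<in>Pset \<rho> (\<alpha> * \<eta>). sigma_sgn \<phi> * (1 - \<beta> * sin \<phi>) powr (- 1 / 2))))"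
proof -
  interpret nonresonant \<rho> \<beta> "\<alpha> * \<eta>"
    using assms by unfold_locales auto
  have analytic: "B_red \<rho> \<beta> (\<alpha> * \<eta>) analytic_on {0}"
    using B_red_analytic[of 0] by simp
  have phase_bounded: "bounded (range (\<lambda>x::real. exp (of_real (x * \<beta>) * \<i>)))"
    by (auto simp: bounded_iff)
  show ?thesis
    unfolding B_fun_eq_B_red
    using watson_lemma[OF analytic B_red_continuous B_red_bounded phase_bounded]
      taylor_coeff_phase_B_red_0
    by blast
qed

end
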